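(* Let $U\in C^{3}(\mathbb{R}^{d})$ be a Morse function, $\boldsymbol{\ell}$ a $C^{1}$ vector field with $\nabla U\cdot\boldsymbol{\ell}\equiv0$, and $\boldsymbol{\sigma}$ a critical point of $U$ such that $\mathbb{H}=\nabla^{2}U(\boldsymbol{\sigma})$ has eigenvalues $-\lambda_{1},\lambda_{2},\dots,\lambda_{d}$ with $\lambda_{1},\dots,\lambda_{d}>0$ and corresponding orthonormal eigenvectors $\boldsymbol{e}_{1},\dots,\boldsymbol{e}_{d}$. Let $\mathbb{L}=D\boldsymbol{\ell}(\boldsymbol{\sigma})$, let $-\mu$ be the unique negative eigenvalue of $\mathbb{H}-\mathbb{L}^{\dagger}$, and let $\boldsymbol{v}$ be a unit eigenvector of $\mathbb{H}-\mathbb{L}^{\dagger}$ for $-\mu$. Then \[ \boldsymbol{v}\cdot\mathbb{H}^{-1}\boldsymbol{v}\,=\,-\frac{(\boldsymbol{v}\cdot\boldsymbol{e}_{1})^{2}}{\lambda_{1}}+\sum_{k=2}^{d}\frac{(\boldsymbol{v}\cdot\boldsymbol{e}_{k})^{2}}{\lambda_{k}}\,=\,-\frac{1}{\mu}\,<\,0. \]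
   Context: $\mathbb{L}^{\dagger}$ is the transpose of $\mathbb{L}$. Under these hypotheses $\mathbb{H}-\mathbb{L}^{\dagger}$ is similar to $\mathbb{H}+\mathbb{L}$, which is invertible with exactly one negative eigenvalue, so $\mu>0$ is well defined. *)

theory Defs
  imports "HOL-Analysis.Analysis"
begin

definition jacobian :: "(real^'n \<Rightarrow> real^'m) \<Rightarrow> real^'n \<Rightarrow> real^'n^'m" where
  "jacobian f x = matrix (frechet_derivative f (at x))"

definition C1_map :: "(real^'n \<Rightarrow> real^'m) \<Rightarrow> bool" where
  "C1_map f \<longleftrightarrow> (\<forall>x. f differentiable (at x)) \<and> continuous_on UNIV (jacobian f)"

definition grad :: "(real^'n \<Rightarrow> real) \<Rightarrow> real^'n \<Rightarrow> real^'n" where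
  "grad U x = (\<chi> i. frechet_derivative U (at x) (axis i 1))"

definition hessian :: "(real^'n \<Rightarrow> real) \<Rightarrow> real^'n \<Rightarrow> real^'n^'n" where
  "hessian U x = jacobian (grad U) x"

definition C3_fun :: "(real^'n \<Rightarrow> real) \<Rightarrow> bool" where
  "C3_fun U \<longleftrightarrow> (\<forall>x. U differentiable (at x)) \<and> C1_map (grad U)
      \<and> (\<forall>i. C1_map (\<lambda>x. hessian U x $ i))"

definition morse :: "(real^'n \<Rightarrow> real) \<Rightarrow> bool" where
  "morse U \<longleftrightarrow> (\<forall>x. grad U x = 0 \<longrightarrow> invertible (hessian U x))"

definition is_eigenvalue :: "real^'n^'n \<Rightarrow> real \<Rightarrow> bool" where
  "is_eigenvalue A c \<longleftrightarrow> (\<exists>w. w \<noteq> 0 \<and> A *v w = c *\<^sub>R w)"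

end

theory Submission
  imports Defs
begin

(* Differentiating grad U . l = 0 at the nondegenerate critical point sigma gives first
   l(sigma) = 0 and then, to second order along each line sigma + t w, (H w) . (L w) = 0,
   i.e. H L is skew. With u = H^-1 v, pairing the eigen-equation (H - L^T) v = -mu v with u gives
   -mu (v . u) = (H u) . v - (L u) . v = v . v - (L u) . (H u) = 1, so v . H^-1 v = -1/mu;
   expanding u in the eigenbasis of H yields the middle expression. *)

lemma has_derivative_jacobian:
  fixes f :: "real^'a \<Rightarrow> real^'b"
  assumes "f differentiable (at x)"
  shows "(f has_derivative (\<lambda>h. jacobian f x *v h)) (at x)"
  using Cartesian_Euclidean_Space.jacobian_works[of f "at x"] assms
  unfolding Defs.jacobian_def Cartesian_Euclidean_Space.jacobian_def by simp

lemma has_vector_derivative_imp_tendsto_quotient: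
  fixes f :: "real \<Rightarrow> 'a::real_normed_vector"
  assumes "(f has_vector_derivative f') (at x)"
  shows "((\<lambda>y. (f y - f x) /\<^sub>R (y - x)) \<longlongrightarrow> f') (at x)"
proof -
  have lim: "((\<lambda>y. norm (f y - f x - (y - x) *\<^sub>R f') / norm (y - x)) \<longlongrightarrow> 0) (at x)"
    using assms by (simp add: has_vector_derivative_def has_derivative_iff_norm)
  have quotient: "norm (f y - f x - (y - x) *\<^sub>R f') / norm (y - x)
      = norm ((f y - f x) /\<^sub>R (y - x) - f')" if "y \<noteq> x" for y
  proof -
    have "(f y - f x) /\<^sub>R (y - x) - f' = (f y - f x - (y - x) *\<^sub>R f') /\<^sub>R (y - x)"
      using that by (simp only: scaleR_right_diff_distrib scaleR_scaleR) simp
    then show ?thesis by (simp add: divide_inverse mult.commute)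
  qed
  have "((\<lambda>y. norm ((f y - f x) /\<^sub>R (y - x) - f')) \<longlongrightarrow> 0) (at x)"
    using lim by (rule Lim_transform_eventually) (simp add: eventually_at_filter quotient[symmetric])
  then show ?thesis
    by (simp add: tendsto_norm_zero_iff LIM_zero_iff)
qed

lemma has_vector_derivative_along_line:
  assumes "(G has_derivative G') (at s)"
  shows "((\<lambda>t. G (s + t *\<^sub>R w)) has_vector_derivative G' w) (at 0)"
proof -
  have "((\<lambda>t. s + t *\<^sub>R w) has_derivative (\<lambda>t. t *\<^sub>R w)) (at 0)"
    by (auto intro!: derivative_eq_intros)
  then have "((G \<circ> (\<lambda>t. s + t *\<^sub>R w)) has_derivative (G' \<circ> (\<lambda>t. t *\<^sub>R w))) (at 0)"
    by (rule diff_chain_at) (use assms in simp)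
  moreover have "G' (t *\<^sub>R w) = t *\<^sub>R G' w" for t
    using has_derivative_linear[OF assms] by (simp add: linear_scale)
  ultimately show ?thesis by (simp add: has_vector_derivative_def o_def)
qed

lemma inner_zero_imp_zero_at_regular_zero:
  fixes G F :: "'a::real_normed_vector \<Rightarrow> 'b::real_inner"
  assumes G: "(G has_derivative G') (at s)" and F: "(F has_derivative F') (at s)"
    and orth: "\<And>x. G x \<bullet> F x = 0" and zero: "G s = 0" and surj: "surj G'"
  shows "F s = 0"
proof -
  have "((\<lambda>x. G x \<bullet> F x) has_derivative (\<lambda>h. G s \<bullet> F' h + G' h \<bullet> F s)) (at s)"
    using G F by (rule has_derivative_inner)
  moreover have "((\<lambda>x. G x \<bullet> F x) has_derivative (\<lambda>h. 0)) (at s)"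
    using orth by simp
  ultimately have "(\<lambda>h. G s \<bullet> F' h + G' h \<bullet> F s) = (\<lambda>h. 0)"
    by (rule has_derivative_unique)
  then have "G' h \<bullet> F s = 0" for h
    using zero by (metis inner_zero_left add_0)
  moreover obtain h where "G' h = F s"
    using surj by (metis surjD)
  ultimately show ?thesis by (metis inner_eq_zero_iff)
qed

lemma inner_derivatives_zero_at_common_zero:
  fixes G F :: "'a::real_normed_vector \<Rightarrow> 'b::real_inner"
  assumes G: "(G has_derivative G') (at s)" and F: "(F has_derivative F') (at s)"
    and orth: "\<And>x. G x \<bullet> F x = 0" and "G s = 0" and "F s = 0"
  shows "G' w \<bullet> F' w = 0"
proof -
  have "((\<lambda>t. G (s + t *\<^sub>R w) /\<^sub>R t) \<longlongrightarrow> G' w) (at 0)"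
    using has_vector_derivative_imp_tendsto_quotient[OF has_vector_derivative_along_line[OF G]]
      \<open>G s = 0\<close> by simp
  moreover have "((\<lambda>t. F (s + t *\<^sub>R w) /\<^sub>R t) \<longlongrightarrow> F' w) (at 0)"
    using has_vector_derivative_imp_tendsto_quotient[OF has_vector_derivative_along_line[OF F]]
      \<open>F s = 0\<close> by simp
  ultimately have "((\<lambda>t. (G (s + t *\<^sub>R w) /\<^sub>R t) \<bullet> (F (s + t *\<^sub>R w) /\<^sub>R t))
      \<longlongrightarrow> G' w \<bullet> F' w) (at (0::real))"
    by (rule tendsto_inner)
  then have "((\<lambda>t. 0) \<longlongrightarrow> G' w \<bullet> F' w) (at (0::real))"
    using orth by simp
  then show ?thesis
    by (simp add: tendsto_const_iff)
qed

lemma inner_derivatives_zero_at_regular_zero: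
  fixes G F :: "'a::real_normed_vector \<Rightarrow> 'b::real_inner"
  assumes G: "(G has_derivative G') (at s)" and F: "(F has_derivative F') (at s)"
    and orth: "\<And>x. G x \<bullet> F x = 0" and "G s = 0" and "surj G'"
  shows "G' w \<bullet> F' w = 0"
proof -
  have "F s = 0"
    using assms by (rule inner_zero_imp_zero_at_regular_zero)
  with G F orth \<open>G s = 0\<close> show ?thesis
    by (rule inner_derivatives_zero_at_common_zero)
qed

lemma matrix_inv_cancel:
  fixes A :: "'a::comm_semiring_1^'n^'n"
  assumes "invertible A"
  shows matrix_inv_mult_cancel: "matrix_inv A *v (A *v x) = x"
    and mult_matrix_inv_cancel: "A *v (matrix_inv A *v y) = y"
proof -
  have "A ** matrix_inv A = mat 1 \<and> matrix_inv A ** A = mat 1"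
    unfolding matrix_inv_def using assms[unfolded invertible_def] by (rule someI_ex)
  then show "matrix_inv A *v (A *v x) = x" "A *v (matrix_inv A *v y) = y"
    by (simp_all add: matrix_vector_mul_assoc)
qed

lemma inner_matrix_inv_eigenvector:
  fixes H L :: "real^'n^'n"
  assumes symmetric: "\<And>x y. (H *v x) \<bullet> y = x \<bullet> (H *v y)" and "invertible H"
    and skew: "\<And>w. (H *v w) \<bullet> (L *v w) = 0"
    and eigen: "(H - transpose L) *v v = c *\<^sub>R v" and unit: "v \<bullet> v = 1"
  shows "c * (v \<bullet> (matrix_inv H *v v)) = 1"
proof -
  define u where "u = matrix_inv H *v v"
  have Hu: "H *v u = v"
    unfolding u_def using \<open>invertible H\<close> by (rule mult_matrix_inv_cancel)
  have "c * (v \<bullet> u) = u \<bullet> ((H - transpose L) *v v)"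
    using eigen by (simp add: inner_commute)
  also have "\<dots> = u \<bullet> (H *v v) - u \<bullet> (transpose L *v v)"
    by (simp add: matrix_vector_mult_diff_rdistrib inner_diff_right del: transpose_matrix_vector)
  also have "u \<bullet> (H *v v) = v \<bullet> v"
    using symmetric[of u v] Hu by (simp add: inner_commute)
  also have "u \<bullet> (transpose L *v v) = (H *v u) \<bullet> (L *v u)"
    using Hu by (metis dot_lmul_matrix inner_commute transpose_matrix_vector)
  finally show ?thesis
    using unit skew[of u] by (simp add: u_def)
qed

locale orthonormal_eigenbasis =
  fixes H :: "real^'n^'n" and e :: "'n \<Rightarrow> real^'n" and s :: "'n \<Rightarrow> real"
  assumes orthonormal: "\<And>i j. e i \<bullet> e j = (if i = j then 1 else 0)"
    and eigen: "\<And>k. H *v e k = s k *\<^sub>R e k"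
begin

lemma expansion: "x = (\<Sum>k\<in>UNIV. (x \<bullet> e k) *\<^sub>R e k)"
proof -
  define E :: "real^'n^'n" where "E = (\<chi> k. e k)"
  have "E ** transpose E = mat 1"
    using orthonormal by (simp add: vec_eq_iff matrix_matrix_mult_def mat_def transpose_def
        inner_vec_def E_def)
  then have "transpose E ** E = mat 1"
    by (simp add: matrix_left_right_inverse)
  then have "x = transpose E *v (E *v x)"
    by (simp add: matrix_vector_mul_assoc del: transpose_matrix_vector)
  also have "\<dots> = (\<Sum>k\<in>UNIV. (x \<bullet> e k) *\<^sub>R e k)"
    by (simp add: vec_eq_iff matrix_vector_mult_def transpose_def sum_component E_def
        inner_vec_def mult.commute del: transpose_matrix_vector)
  finally show ?thesis .
qed

lemma mult_vector_sum:
  "H *v (\<Sum>k\<in>UNIV. c k *\<^sub>R e k) = (\<Sum>k\<in>UNIV. (c k * s k) *\<^sub>R e k)"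
  by (simp add: linear_sum[OF matrix_vector_mul_linear] matrix_vector_mult_scaleR eigen)

lemma inner_mult_vector: "(H *v x) \<bullet> y = (\<Sum>k\<in>UNIV. s k * (x \<bullet> e k) * (y \<bullet> e k))"
proof -
  have "H *v x = (\<Sum>k\<in>UNIV. ((x \<bullet> e k) * s k) *\<^sub>R e k)"
    by (subst expansion[of x]) (rule mult_vector_sum)
  then show ?thesis
    by (simp add: inner_sum_left inner_sum_right inner_commute mult_ac)
qed

lemma symmetric: "(H *v x) \<bullet> y = x \<bullet> (H *v y)"
  by (simp add: inner_mult_vector inner_commute[of x] mult_ac)

lemma matrix_inv_mult_vector:
  assumes nonzero: "\<And>k. s k \<noteq> 0"
  shows "invertible H" and "matrix_inv H *v y = (\<Sum>k\<in>UNIV. (y \<bullet> e k / s k) *\<^sub>R e k)"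
proof -
  have right_inverse: "H *v (\<Sum>k\<in>UNIV. (z \<bullet> e k / s k) *\<^sub>R e k) = z" for z
    by (subst (2) expansion[of z]) (simp add: mult_vector_sum nonzero)
  then show "invertible H"
    unfolding invertible_right_inverse matrix_right_invertible_surjective surj_def by metis
  then show "matrix_inv H *v y = (\<Sum>k\<in>UNIV. (y \<bullet> e k / s k) *\<^sub>R e k)"
    by (metis right_inverse matrix_inv_mult_cancel)
qed

lemma inner_matrix_inv:
  assumes "\<And>k. s k \<noteq> 0"
  shows "y \<bullet> (matrix_inv H *v y) = (\<Sum>k\<in>UNIV. (y \<bullet> e k)\<^sup>2 / s k)"
  by (simp add: matrix_inv_mult_vector[OF assms] inner_sum_right power2_eq_square)

end

theorem lemma8p1:
  fixes U :: "real^'n \<Rightarrow> real" and ell :: "real^'n \<Rightarrow> real^'n"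
    and sigma v :: "real^'n" and lam :: "'n \<Rightarrow> real" and e :: "'n \<Rightarrow> real^'n"
    and i1 :: 'n and mu :: real
  assumes U_C3: "C3_fun U" and U_morse: "morse U"
    and l_C1: "C1_map ell" and orth: "\<And>x. grad U x \<bullet> ell x = 0"
    and crit: "grad U sigma = 0"
    and lam_pos: "\<And>k. lam k > 0"
    and e_orthonormal: "\<And>i j. e i \<bullet> e j = (if i = j then 1 else 0)"
    and e_eigen: "\<And>k. hessian U sigma *v e k = (if k = i1 then - lam k else lam k) *\<^sub>R e k"
    and mu_pos: "mu > 0"
    and mu_eig: "is_eigenvalue (hessian U sigma - transpose (jacobian ell sigma)) (- mu)"
    and mu_unique: "\<And>c. c < 0 \<Longrightarrow> is_eigenvalue (hessian U sigma - transpose (jacobian ell sigma)) c \<Longrightarrow> c = - mu"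
    and v_unit: "norm v = 1"
    and v_eig: "(hessian U sigma - transpose (jacobian ell sigma)) *v v = (- mu) *\<^sub>R v"
  shows "v \<bullet> (matrix_inv (hessian U sigma) *v v)
           = - (v \<bullet> e i1)\<^sup>2 / lam i1 + (\<Sum>k\<in>UNIV - {i1}. (v \<bullet> e k)\<^sup>2 / lam k)
      \<and> - (v \<bullet> e i1)\<^sup>2 / lam i1 + (\<Sum>k\<in>UNIV - {i1}. (v \<bullet> e k)\<^sup>2 / lam k) = - 1 / mu
      \<and> - 1 / mu < 0"
proof -
  define H where "H = hessian U sigma"
  define L where "L = jacobian ell sigma"
  define s where "s k = (if k = i1 then - lam k else lam k)" for k
  interpret orthonormal_eigenbasis H e s
    using e_orthonormal e_eigen by unfold_locales (simp_all add: H_def s_def)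
  have s_nonzero: "s k \<noteq> 0" for k
    using lam_pos[of k] by (auto simp add: s_def)
  have "invertible H"
    using matrix_inv_mult_vector(1)[OF s_nonzero] .
  have grad_derivative: "(grad U has_derivative (\<lambda>h. H *v h)) (at sigma)"
    using U_C3 unfolding C3_fun_def C1_map_def H_def hessian_def
    by (blast intro: has_derivative_jacobian)
  have ell_derivative: "(ell has_derivative (\<lambda>h. L *v h)) (at sigma)"
    using l_C1 unfolding C1_map_def L_def by (blast intro: has_derivative_jacobian)
  have skew: "(H *v w) \<bullet> (L *v w) = 0" for w
    using grad_derivative ell_derivative orth crit
    by (rule inner_derivatives_zero_at_regular_zero)
      (use \<open>invertible H\<close> in \<open>simp add: invertible_eq_bij bij_is_surj\<close>)
  have "- mu * (v \<bullet> (matrix_inv H *v v)) = 1"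
    using symmetric \<open>invertible H\<close> skew
  proof (rule inner_matrix_inv_eigenvector)
    show "(H - transpose L) *v v = - mu *\<^sub>R v" "v \<bullet> v = 1"
      using v_eig v_unit by (simp_all add: H_def L_def norm_eq_1)
  qed
  then have inv_form: "v \<bullet> (matrix_inv H *v v) = - 1 / mu"
    using mu_pos by (simp add: field_simps)
  have "v \<bullet> (matrix_inv H *v v) = (\<Sum>k\<in>UNIV. (v \<bullet> e k)\<^sup>2 / s k)"
    by (rule inner_matrix_inv[OF s_nonzero])
  also have "\<dots> = (v \<bullet> e i1)\<^sup>2 / s i1 + (\<Sum>k\<in>UNIV - {i1}. (v \<bullet> e k)\<^sup>2 / s k)"
    by (simp add: sum.remove)
  also have "\<dots> = - (v \<bullet> e i1)\<^sup>2 / lam i1 + (\<Sum>k\<in>UNIV - {i1}. (v \<bullet> e k)\<^sup>2 / lam k)"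
    by (simp add: s_def)
  finally show ?thesis
    using inv_form mu_pos by (simp add: H_def)
qed

end
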